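(* Let $A,B\in\mathbb{R}^{N\times N}$, $\tau>0$, $T>0$. The system $u'(t)=Au(t)+Bu(t-\tau)$ has no nontrivial $T$-periodic solutions if and only if $$h_k:=\det\begin{pmatrix}X_k & -Y_k\\ Y_k & X_k\end{pmatrix}\neq0\quad\text{for all }k\in\mathbb{N}_0,$$ where $X_k:=A+\cos(\lambda_k\tau)B$, $Y_k:=\lambda_kI+\sin(\lambda_k\tau)B$ and $\lambda_k:=2k\pi/T$. *)

theory Defs
  imports "HOL-Analysis.Analysis"
begin

definition lam :: "real \<Rightarrow> nat \<Rightarrow> real" where
  "lam T k = 2 * real k * pi / T"

definition Xk :: "real^'n^'n \<Rightarrow> real^'n^'n \<Rightarrow> real \<Rightarrow> real \<Rightarrow> nat \<Rightarrow> real^'n^'n" where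
  "Xk A B \<tau> T k = A + cos (lam T k * \<tau>) *\<^sub>R B"

definition Yk :: "real^'n^'n \<Rightarrow> real^'n^'n \<Rightarrow> real \<Rightarrow> real \<Rightarrow> nat \<Rightarrow> real^'n^'n" where
  "Yk A B \<tau> T k = lam T k *\<^sub>R mat 1 + sin (lam T k * \<tau>) *\<^sub>R B"

definition block2 :: "real^'n^'n \<Rightarrow> real^'n^'n \<Rightarrow> real^('n + 'n)^('n + 'n)" where
  "block2 P Q = (\<chi> i j. case i of
      Inl a \<Rightarrow> (case j of Inl b \<Rightarrow> P $ a $ b | Inr b \<Rightarrow> - (Q $ a $ b))
    | Inr a \<Rightarrow> (case j of Inl b \<Rightarrow> Q $ a $ b | Inr b \<Rightarrow> P $ a $ b))"

definition hk :: "real^'n^'n \<Rightarrow> real^'n^'n \<Rightarrow> real \<Rightarrow> real \<Rightarrow> nat \<Rightarrow> real" where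
  "hk A B \<tau> T k = det (block2 (Xk A B \<tau> T k) (Yk A B \<tau> T k))"

end

(*
  If h_k = 0, a kernel vector (x, y) of the block matrix yields the periodic solution
  cos (lambda_k t) x + sin (lambda_k t) y.  Conversely, pairing the equation with cos (lambda_k t)
  and sin (lambda_k t) over one period -- integrating the derivative by parts and undoing the
  delay by a periodic shift -- shows that the Fourier coefficients (C_k, S_k) of a periodic
  solution lie in the kernel of the same block matrix.  So if no h_k vanishes, all Fourier
  coefficients vanish, and a continuous periodic function with vanishing Fourier coefficients is
  zero: lifted to the unit circle it is, by Stone-Weierstrass, a uniform limit of polynomials in
  cis (2 pi t / T), i.e. of trigonometric polynomials, so its L^2 norm vanishes.
*)

theory Submission
  imports Defs
begin

section \<open>Periodic functions\<close>

lemma periodic_add_of_int: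
  assumes periodic: "\<And>x. f (x + T) = f x"
  shows "f (x + of_int n * T) = f x"
proof (induction n arbitrary: x rule: int_induct[where k = 0])
  case base
  then show ?case by simp
next
  case (step1 i)
  have "f (x + of_int (i + 1) * T) = f ((x + T) + of_int i * T)"
    by (simp add: algebra_simps)
  also have "\<dots> = f x"
    using step1.IH periodic by simp
  finally show ?case .
next
  case (step2 i)
  have "f (x + of_int (i - 1) * T) = f ((x - T) + of_int i * T)"
    by (simp add: algebra_simps)
  also have "\<dots> = f x"
    using step2.IH periodic[of "x - T"] by simp
  finally show ?case .
qed

lemma add_floor_multiple_in_period:
  fixes x T :: real
  assumes "T > 0"
  shows "x + of_int (- \<lfloor>x / T\<rfloor>) * T \<in> {0..<T}"
proof -
  have "x + of_int (- \<lfloor>x / T\<rfloor>) * T = frac (x / T) * T"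
    using assms by (simp add: frac_def algebra_simps)
  moreover have "frac (x / T) * T < 1 * T"
    using assms frac_lt_1 by (intro mult_strict_right_mono) auto
  ultimately show ?thesis
    using assms frac_ge_0 by simp
qed

lemma integrable_continuous_UNIV:
  fixes f :: "real \<Rightarrow> 'a::banach"
  shows "continuous_on UNIV f \<Longrightarrow> f integrable_on {a..b}"
  by (rule integrable_continuous_real) (use continuous_on_subset in blast)

lemma integral_periodic_shift:
  fixes f :: "real \<Rightarrow> 'a::euclidean_space"
  assumes f: "continuous_on UNIV f" and periodic: "\<And>x. f (x + T) = f x" and "T > 0"
  shows "integral {0..T} (\<lambda>t. f (t + c)) = integral {0..T} f"
proof -
  define H where "H a = integral {a..a + T} f" for a
  have shift: "integral {a..b} (\<lambda>t. f (t + c)) = integral {a + c..b + c} f" for a b c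
    using integral_shift_real_ivl[of "a + c" c "b + c" f] by simp
  have "H (a + T) = H a" for a
    using shift[of a "a + T" T] periodic by (simp add: H_def algebra_simps)
  then have H_periodic: "H (a + of_int n * T) = H a" for a n
    by (rule periodic_add_of_int)
  have H_period: "H a = H 0" if "a \<in> {0..<T}" for a
  proof -
    have "H a = integral {a..T} f + integral {T..a + T} f"
      unfolding H_def using that
      by (intro Henstock_Kurzweil_Integration.integral_combine[symmetric] integrable_continuous_UNIV f)
        auto
    also have "integral {T..a + T} f = integral {0..a} f"
      using shift[of 0 a T] periodic by simp
    also have "integral {a..T} f + integral {0..a} f = integral {0..T} f"
      using that
      by (subst add.commute, intro Henstock_Kurzweil_Integration.integral_combine
          integrable_continuous_UNIV f) auto
    finally show ?thesis
      by (simp add: H_def)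
  qed
  have "integral {0..T} (\<lambda>t. f (t + c)) = H c"
    using shift[of 0 T c] by (simp add: H_def add.commute)
  also have "\<dots> = H (c + of_int (- \<lfloor>c / T\<rfloor>) * T)"
    by (rule H_periodic[symmetric])
  also have "\<dots> = H 0"
    by (rule H_period, rule add_floor_multiple_in_period) fact
  finally show ?thesis
    by (simp add: H_def)
qed

section \<open>Vanishing Fourier coefficients\<close>

definition trig_orthogonal :: "real \<Rightarrow> real \<Rightarrow> real \<Rightarrow> (real \<Rightarrow> real) \<Rightarrow> bool" where
  "trig_orthogonal \<omega> a b f \<longleftrightarrow> continuous_on UNIV f \<and>
     (\<forall>k::int. integral {a..b} (\<lambda>t. f t * cos (of_int k * (\<omega> * t))) = 0 \<and>
               integral {a..b} (\<lambda>t. f t * sin (of_int k * (\<omega> * t))) = 0)"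

lemma integral_eq_lincomb:
  fixes f g h :: "real \<Rightarrow> real"
  assumes "\<And>t. h t = c * f t + d * g t" "continuous_on UNIV f" "continuous_on UNIV g"
  shows "integral {a..b} h = c * integral {a..b} f + d * integral {a..b} g"
proof -
  have "integral {a..b} h = integral {a..b} (\<lambda>t. c * f t) + integral {a..b} (\<lambda>t. d * g t)"
    unfolding assms(1)
    by (intro Henstock_Kurzweil_Integration.integral_add integrable_continuous_UNIV
        continuous_intros assms(2,3))
  then show ?thesis
    by simp
qed

lemma trig_orthogonal_lincomb:
  assumes "trig_orthogonal \<omega> a b f" "trig_orthogonal \<omega> a b g"
  shows "trig_orthogonal \<omega> a b (\<lambda>t. c * f t + d * g t)"
proof -
  have f: "continuous_on UNIV f" and g: "continuous_on UNIV g"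
    using assms unfolding trig_orthogonal_def by auto
  have lincomb: "integral {a..b} (\<lambda>t. (c * f t + d * g t) * \<phi> t) =
      c * integral {a..b} (\<lambda>t. f t * \<phi> t) + d * integral {a..b} (\<lambda>t. g t * \<phi> t)"
    if "continuous_on UNIV \<phi>" for \<phi>
    using that by (intro integral_eq_lincomb continuous_intros f g) (auto simp: algebra_simps)
  have cos_cont: "continuous_on UNIV (\<lambda>t. cos (of_int k * (\<omega> * t)))"
    and sin_cont: "continuous_on UNIV (\<lambda>t. sin (of_int k * (\<omega> * t)))" for k
    by (intro continuous_intros)+
  have "continuous_on UNIV (\<lambda>t. c * f t + d * g t)"
    by (intro continuous_intros f g)
  then show ?thesis
    using assms unfolding trig_orthogonal_def lincomb[OF cos_cont] lincomb[OF sin_cont] by simp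
qed

lemma of_int_plus_minus_one_mult:
  "of_int (k + 1) * (x::real) = of_int k * x + x" "of_int (k - 1) * (x::real) = of_int k * x - x"
  by (simp_all add: algebra_simps)

lemma trig_orthogonal_mult_cos:
  assumes "trig_orthogonal \<omega> a b f"
  shows "trig_orthogonal \<omega> a b (\<lambda>t. f t * cos (\<omega> * t))"
proof -
  have f: "continuous_on UNIV f"
    and orth: "\<And>k. integral {a..b} (\<lambda>t. f t * cos (of_int k * (\<omega> * t))) = 0"
              "\<And>k. integral {a..b} (\<lambda>t. f t * sin (of_int k * (\<omega> * t))) = 0"
    using assms unfolding trig_orthogonal_def by auto
  have "integral {a..b} (\<lambda>t. f t * cos (\<omega> * t) * cos (of_int k * (\<omega> * t))) =
      1/2 * integral {a..b} (\<lambda>t. f t * cos (of_int (k + 1) * (\<omega> * t))) +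
      1/2 * integral {a..b} (\<lambda>t. f t * cos (of_int (k - 1) * (\<omega> * t)))" for k
    by (rule integral_eq_lincomb)
      (auto intro!: continuous_intros f simp: of_int_plus_minus_one_mult cos_add cos_diff algebra_simps)
  moreover have "integral {a..b} (\<lambda>t. f t * cos (\<omega> * t) * sin (of_int k * (\<omega> * t))) =
      1/2 * integral {a..b} (\<lambda>t. f t * sin (of_int (k + 1) * (\<omega> * t))) +
      1/2 * integral {a..b} (\<lambda>t. f t * sin (of_int (k - 1) * (\<omega> * t)))" for k
    by (rule integral_eq_lincomb)
      (auto intro!: continuous_intros f simp: of_int_plus_minus_one_mult sin_add sin_diff algebra_simps)
  ultimately show ?thesis
    unfolding trig_orthogonal_def using orth
    by (simp del: of_int_add of_int_diff) (intro continuous_intros f)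
qed

lemma trig_orthogonal_mult_sin:
  assumes "trig_orthogonal \<omega> a b f"
  shows "trig_orthogonal \<omega> a b (\<lambda>t. f t * sin (\<omega> * t))"
proof -
  have f: "continuous_on UNIV f"
    and orth: "\<And>k. integral {a..b} (\<lambda>t. f t * cos (of_int k * (\<omega> * t))) = 0"
              "\<And>k. integral {a..b} (\<lambda>t. f t * sin (of_int k * (\<omega> * t))) = 0"
    using assms unfolding trig_orthogonal_def by auto
  have "integral {a..b} (\<lambda>t. f t * sin (\<omega> * t) * cos (of_int k * (\<omega> * t))) =
      1/2 * integral {a..b} (\<lambda>t. f t * sin (of_int (k + 1) * (\<omega> * t))) +
      (- 1/2) * integral {a..b} (\<lambda>t. f t * sin (of_int (k - 1) * (\<omega> * t)))" for k
    by (rule integral_eq_lincomb)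
      (auto intro!: continuous_intros f simp: of_int_plus_minus_one_mult sin_add sin_diff algebra_simps)
  moreover have "integral {a..b} (\<lambda>t. f t * sin (\<omega> * t) * sin (of_int k * (\<omega> * t))) =
      1/2 * integral {a..b} (\<lambda>t. f t * cos (of_int (k - 1) * (\<omega> * t))) +
      (- 1/2) * integral {a..b} (\<lambda>t. f t * cos (of_int (k + 1) * (\<omega> * t)))" for k
    by (rule integral_eq_lincomb)
      (auto intro!: continuous_intros f simp: of_int_plus_minus_one_mult cos_add cos_diff algebra_simps)
  ultimately show ?thesis
    unfolding trig_orthogonal_def using orth
    by (simp del: of_int_add of_int_diff) (intro continuous_intros f)
qed

lemma trig_orthogonal_mult_polynomial:
  assumes "real_polynomial_function g"
  shows "trig_orthogonal \<omega> a b f \<Longrightarrow> trig_orthogonal \<omega> a b (\<lambda>t. f t * g (cis (\<omega> * t)))"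
  using assms
proof (induction g arbitrary: f rule: real_polynomial_function.induct)
  case (linear g)
  have "g z = g (Re z *\<^sub>R 1 + Im z *\<^sub>R \<i>)" for z
    by (rule arg_cong[of _ _ g]) (simp add: complex_eq_iff)
  also have "\<dots> z = Re z * g 1 + Im z * g \<i>" for z
    using bounded_linear.linear[OF linear.hyps] by (simp add: linear_add linear_scale)
  finally have g_linear: "g z = Re z * g 1 + Im z * g \<i>" for z .
  have "(\<lambda>t. f t * g (cis (\<omega> * t))) =
      (\<lambda>t. g 1 * (f t * cos (\<omega> * t)) + g \<i> * (f t * sin (\<omega> * t)))"
    by (rule ext, subst g_linear) (simp add: algebra_simps)
  then show ?case
    using linear.prems
    by (simp add: trig_orthogonal_lincomb trig_orthogonal_mult_cos trig_orthogonal_mult_sin)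
next
  case (const c)
  have "(\<lambda>t. f t * c) = (\<lambda>t. c * f t + 0 * f t)"
    by (simp add: mult.commute)
  then show ?case
    using const.prems by (simp only: trig_orthogonal_lincomb)
next
  case (add g h)
  have "(\<lambda>t. f t * (g (cis (\<omega> * t)) + h (cis (\<omega> * t)))) =
      (\<lambda>t. 1 * (f t * g (cis (\<omega> * t))) + 1 * (f t * h (cis (\<omega> * t))))"
    by (simp add: algebra_simps)
  then show ?case
    using add by (simp only: trig_orthogonal_lincomb)
next
  case (mult g h)
  then show ?case
    by (simp add: mult.assoc[symmetric])
qed

lemma Arg2pi_eq_Arg_or_Arg_plus_2pi:
  assumes "z \<noteq> 0"
  shows "Arg2pi z = Arg z \<or> Arg2pi z = Arg z + 2 * pi"
proof -
  have Arg2pi: "is_Arg z (Arg2pi z)" "0 \<le> Arg2pi z" "Arg2pi z < 2 * pi"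
    using Arg2pi[of z] by auto
  have Arg: "is_Arg z (Arg z)" "is_Arg z (Arg z + 2 * pi)" "- pi < Arg z" "Arg z \<le> pi"
    using is_Arg_Arg[OF assms] is_Arg_2pi_iff[of z "Arg z" 1] mpi_less_Arg Arg_le_pi by auto
  show ?thesis
  proof (cases "Arg z \<ge> 0")
    case True
    then show ?thesis
      using is_Arg_eqI[OF Arg2pi(1) Arg(1) _ assms] Arg2pi Arg by auto
  next
    case False
    then show ?thesis
      using is_Arg_eqI[OF Arg2pi(1) Arg(2) _ assms] Arg2pi Arg by auto
  qed
qed

text \<open>\<open>Arg2pi\<close> jumps only on the positive real axis, where \<open>Arg\<close> is continuous; by periodicity
  the two lifts \<open>g \<circ> Arg2pi\<close> and \<open>g \<circ> Arg\<close> agree.\<close>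

lemma continuous_on_periodic_Arg2pi:
  fixes g :: "real \<Rightarrow> 'a::topological_space"
  assumes g: "continuous_on UNIV g" and periodic: "\<And>x. g (x + 2 * pi) = g x"
  shows "continuous_on (- {0}) (\<lambda>z. g (Arg2pi z))"
proof (rule continuous_at_imp_continuous_on, rule ballI)
  fix z :: complex
  assume "z \<in> - {0}"
  then have "z \<noteq> 0" by simp
  have g_cont: "isCont g x" for x
    using g by (simp add: continuous_on_eq_continuous_at)
  have g_Arg: "g (Arg2pi y) = g (Arg y)" if "y \<noteq> 0" for y
    using Arg2pi_eq_Arg_or_Arg_plus_2pi[OF that] periodic by auto
  show "isCont (\<lambda>z. g (Arg2pi z)) z"
  proof (cases "z \<in> \<real>\<^sub>\<ge>\<^sub>0")
    case False
    then show ?thesis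
      by (intro isCont_o2[OF continuous_at_Arg2pi] g_cont)
  next
    case True
    then have "z \<notin> \<real>\<^sub>\<le>\<^sub>0"
      using \<open>z \<noteq> 0\<close> by (auto simp: complex_nonneg_Reals_iff complex_nonpos_Reals_iff complex_eq_iff)
    then have "isCont (\<lambda>y. g (Arg y)) z"
      by (intro isCont_o2[OF continuous_at_Arg] g_cont)
    moreover have "eventually (\<lambda>y. g (Arg2pi y) = g (Arg y)) (nhds z)"
      unfolding eventually_nhds using \<open>z \<noteq> 0\<close> g_Arg
      by (intro exI[of _ "- {0}"]) auto
    ultimately show ?thesis
      using isCont_cong[of "\<lambda>y. g (Arg2pi y)" "\<lambda>y. g (Arg y)"] by simp
  qed
qed

lemma periodic_Arg2pi_cis:
  assumes periodic: "\<And>x. g (x + 2 * pi) = g x"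
  shows "g (Arg2pi (cis t)) = g t"
proof -
  define n where "n = - \<lfloor>t / (2 * pi)\<rfloor>"
  have t': "t + of_int n * (2 * pi) \<in> {0..<2 * pi}"
    unfolding n_def by (rule add_floor_multiple_in_period) simp
  have "cis (of_int n * (2 * pi)) = 1"
    using cis_multiple_2pi[of "of_int n"] by (simp add: mult.commute)
  then have "cis t = cis (t + of_int n * (2 * pi))"
    by (simp add: cis_mult[symmetric])
  then have "Arg2pi (cis t) = t + of_int n * (2 * pi)"
    using t' by (intro Arg2pi_unique[where r = 1]) (auto simp: cis_conv_exp)
  then show ?thesis
    using periodic_add_of_int[of g "2 * pi" t n] periodic by simp
qed

lemma periodic_uniform_approx_cis_polynomial:
  fixes w :: "real \<Rightarrow> real"
  assumes "T > 0" and w: "continuous_on UNIV w" and periodic: "\<And>x. w (x + T) = w x"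
    and "e > 0"
  obtains p where "real_polynomial_function p" "\<And>t. \<bar>w t - p (cis (2 * pi / T * t))\<bar> < e"
proof -
  define g where "g s = w (s * T / (2 * pi))" for s
  have g_cont: "continuous_on UNIV g"
    unfolding g_def by (intro continuous_on_compose2[OF w] continuous_intros) auto
  have g_periodic: "g (s + 2 * pi) = g s" for s
  proof -
    have "(s + 2 * pi) * T / (2 * pi) = s * T / (2 * pi) + T"
      by (simp add: field_simps)
    then show ?thesis
      using periodic by (simp add: g_def)
  qed
  have "continuous_on (sphere 0 1) (\<lambda>z. g (Arg2pi z))"
    using continuous_on_periodic_Arg2pi[OF g_cont g_periodic] by (rule continuous_on_subset) auto
  then obtain p where p: "real_polynomial_function p"
    and approx: "\<And>z. z \<in> sphere 0 1 \<Longrightarrow> \<bar>g (Arg2pi z) - p z\<bar> < e"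
    using Stone_Weierstrass_real_polynomial_function[OF compact_sphere _ \<open>e > 0\<close>] by blast
  have "w t = g (Arg2pi (cis (2 * pi / T * t)))" for t
    using periodic_Arg2pi_cis[of g, OF g_periodic] \<open>T > 0\<close> by (simp add: g_def)
  then show ?thesis
    using that[OF p] approx[of "cis (2 * pi / T * _)"] by simp
qed

lemma nonneg_continuous_integral_le_0_imp_eq_0:
  fixes g :: "real \<Rightarrow> real"
  assumes "continuous_on {a..b} g" "\<And>t. t \<in> {a..b} \<Longrightarrow> 0 \<le> g t" "integral {a..b} g \<le> 0"
    and "a < b" "x \<in> {a..b}"
  shows "g x = 0"
proof -
  have integrable: "g integrable_on {a..b}"
    using assms(1) by (rule integrable_continuous_real)
  then have "integral {a..b} g = 0"
    using assms(2,3) integral_nonneg[of g "{a..b}"] by fastforce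
  then have "(g has_integral 0) (cbox a b)"
    using integrable by (metis box_real(2) has_integral_integral)
  then show ?thesis
    using has_integral_0_cbox_imp_0[of a b g x] assms by auto
qed

lemma trig_orthogonal_integral_square_le:
  fixes w :: "real \<Rightarrow> real"
  assumes "T > 0" and periodic: "\<And>x. w (x + T) = w x"
    and orth: "trig_orthogonal (2 * pi / T) 0 T w" and "e > 0"
  shows "integral {0..T} (\<lambda>t. w t * w t) \<le> e * integral {0..T} (\<lambda>t. \<bar>w t\<bar>)"
proof -
  have w: "continuous_on UNIV w"
    using orth unfolding trig_orthogonal_def by simp
  obtain p where p: "real_polynomial_function p"
    and approx: "\<And>t. \<bar>w t - p (cis (2 * pi / T * t))\<bar> < e"
    using periodic_uniform_approx_cis_polynomial[OF \<open>T > 0\<close> w periodic \<open>e > 0\<close>] by blast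
  define q where "q t = p (cis (2 * pi / T * t))" for t
  have "continuous_on UNIV p"
    using p by (simp add: continuous_on_polymonial_function real_polynomial_function_eq)
  then have q: "continuous_on UNIV q"
    unfolding q_def
    by (rule continuous_on_compose2) (use \<open>T > 0\<close> in \<open>auto intro!: continuous_intros\<close>)
  have "trig_orthogonal (2 * pi / T) 0 T (\<lambda>t. w t * q t)"
    unfolding q_def by (rule trig_orthogonal_mult_polynomial[OF p orth])
  then have "integral {0..T} (\<lambda>t. w t * q t * cos (of_int 0 * (2 * pi / T * t))) = 0"
    unfolding trig_orthogonal_def by blast
  moreover have "integral {0..T} (\<lambda>t. w t * (w t - q t)) =
      integral {0..T} (\<lambda>t. w t * w t) - integral {0..T} (\<lambda>t. w t * q t)"
    unfolding right_diff_distrib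
    by (intro integral_diff integrable_continuous_UNIV continuous_intros w q)
  ultimately have "integral {0..T} (\<lambda>t. w t * w t) = integral {0..T} (\<lambda>t. w t * (w t - q t))"
    by simp
  also have "\<dots> \<le> integral {0..T} (\<lambda>t. e * \<bar>w t\<bar>)"
  proof (rule integral_le)
    show "w t * (w t - q t) \<le> e * \<bar>w t\<bar>" for t
      using mult_left_mono[OF less_imp_le[OF approx[of t]], of "\<bar>w t\<bar>"]
      by (auto simp: q_def abs_mult mult.commute intro: order_trans[OF abs_ge_self])
  qed (intro integrable_continuous_UNIV continuous_intros w q)+
  finally show ?thesis
    by simp
qed

lemma periodic_trig_orthogonal_eq_0:
  fixes w :: "real \<Rightarrow> real"
  assumes "T > 0" and periodic: "\<And>x. w (x + T) = w x"
    and orth: "trig_orthogonal (2 * pi / T) 0 T w"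
  shows "w x = 0"
proof -
  have w: "continuous_on UNIV w"
    using orth unfolding trig_orthogonal_def by simp
  define K where "K = integral {0..T} (\<lambda>t. \<bar>w t\<bar>)"
  have "0 \<le> K"
    unfolding K_def by (intro integral_nonneg integrable_continuous_UNIV continuous_intros w) auto
  have "integral {0..T} (\<lambda>t. w t * w t) \<le> 0 + e" if "e > 0" for e
  proof -
    have "e / (K + 1) > 0"
      using that \<open>0 \<le> K\<close> by simp
    then have "integral {0..T} (\<lambda>t. w t * w t) \<le> e / (K + 1) * K"
      unfolding K_def by (rule trig_orthogonal_integral_square_le[OF \<open>T > 0\<close> periodic orth])
    also have "\<dots> \<le> e"
      using that \<open>0 \<le> K\<close> by (simp add: field_simps)
    finally show ?thesis
      by simp
  qed
  then have "integral {0..T} (\<lambda>t. w t * w t) \<le> 0"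
    by (rule field_le_epsilon)
  then have w_sq_0: "w t * w t = 0" if "t \<in> {0..T}" for t
    using \<open>T > 0\<close> that
    by (intro nonneg_continuous_integral_le_0_imp_eq_0[where a = 0 and b = T])
       (auto intro: continuous_on_subset[of UNIV] continuous_intros w)
  have "w x = w (x + of_int (- \<lfloor>x / T\<rfloor>) * T)"
    using periodic_add_of_int[of w T] periodic by metis
  also have "\<dots> = 0"
    using w_sq_0 add_floor_multiple_in_period[OF \<open>T > 0\<close>, of x] by simp
  finally show ?thesis .
qed

lemma trig_orthogonalI_nat:
  assumes "continuous_on UNIV f"
    and cos: "\<And>k::nat. integral {a..b} (\<lambda>t. f t * cos (real k * (\<omega> * t))) = 0"
    and sin: "\<And>k::nat. integral {a..b} (\<lambda>t. f t * sin (real k * (\<omega> * t))) = 0"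
  shows "trig_orthogonal \<omega> a b f"
proof -
  have "integral {a..b} (\<lambda>t. f t * cos (of_int k * (\<omega> * t))) = 0 \<and>
        integral {a..b} (\<lambda>t. f t * sin (of_int k * (\<omega> * t))) = 0" for k :: int
  proof -
    obtain n where "k = int n \<or> k = - int n"
      by (metis int_cases2)
    then show ?thesis
      using cos[of n] sin[of n] by auto
  qed
  then show ?thesis
    unfolding trig_orthogonal_def using assms(1) by simp
qed

lemma periodic_eq_0_if_fourier_coefficients_eq_0:
  fixes u :: "real \<Rightarrow> real^'n"
  assumes "T > 0" and u: "continuous_on UNIV u" and periodic: "\<And>x. u (x + T) = u x"
    and cos: "\<And>k. integral {0..T} (\<lambda>t. cos (lam T k * t) *\<^sub>R u t) = 0"
    and sin: "\<And>k. integral {0..T} (\<lambda>t. sin (lam T k * t) *\<^sub>R u t) = 0"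
  shows "u x = 0"
proof -
  have lam: "lam T k * t = real k * (2 * pi / T * t)" for k t
    by (simp add: lam_def)
  have "u x $ j = 0" for j
  proof (rule periodic_trig_orthogonal_eq_0[where w = "\<lambda>t. u t $ j", OF \<open>T > 0\<close>])
    show "u (x + T) $ j = u x $ j" for x
      using periodic by simp
    show "trig_orthogonal (2 * pi / T) 0 T (\<lambda>t. u t $ j)"
    proof (rule trig_orthogonalI_nat)
      show "continuous_on UNIV (\<lambda>t. u t $ j)"
        by (intro continuous_intros u)
      fix k :: nat
      have "integral {0..T} (\<lambda>t. u t $ j * cos (real k * (2 * pi / T * t))) =
          integral {0..T} (\<lambda>t. (cos (lam T k * t) *\<^sub>R u t) $ j)"
        unfolding lam[symmetric] by (simp add: mult.commute)
      also have "\<dots> = integral {0..T} (\<lambda>t. cos (lam T k * t) *\<^sub>R u t) $ j"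
        by (intro integral_component_eq_cart integrable_continuous_UNIV continuous_intros u)
      finally show "integral {0..T} (\<lambda>t. u t $ j * cos (real k * (2 * pi / T * t))) = 0"
        using cos by simp
      have "integral {0..T} (\<lambda>t. u t $ j * sin (real k * (2 * pi / T * t))) =
          integral {0..T} (\<lambda>t. (sin (lam T k * t) *\<^sub>R u t) $ j)"
        unfolding lam[symmetric] by (simp add: mult.commute)
      also have "\<dots> = integral {0..T} (\<lambda>t. sin (lam T k * t) *\<^sub>R u t) $ j"
        by (intro integral_component_eq_cart integrable_continuous_UNIV continuous_intros u)
      finally show "integral {0..T} (\<lambda>t. u t $ j * sin (real k * (2 * pi / T * t))) = 0"
        using sin by simp
    qed
  qed
  then show ?thesis
    by (simp add: vec_eq_iff)
qed

section \<open>The block matrix\<close>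

definition vec_join :: "'a^'m \<Rightarrow> 'a^'n \<Rightarrow> 'a^('m + 'n)" where
  "vec_join x y = (\<chi> i. case i of Inl a \<Rightarrow> x $ a | Inr b \<Rightarrow> y $ b)"

lemma vec_join_eq_0_iff [simp]: "vec_join x y = 0 \<longleftrightarrow> x = 0 \<and> y = 0"
  by (auto simp: vec_eq_iff vec_join_def split: sum.splits)

lemma vec_join_cases:
  obtains x y where "v = vec_join x y"
proof
  show "v = vec_join (\<chi> a. v $ Inl a) (\<chi> b. v $ Inr b)"
    by (simp add: vec_eq_iff vec_join_def split: sum.splits)
qed

lemma block2_mult_vec_join:
  "block2 P Q *v vec_join x y = vec_join (P *v x - Q *v y) (Q *v x + P *v y)"
proof -
  have sum_Plus: "sum f UNIV = sum (f \<circ> Inl) UNIV + sum (f \<circ> Inr) UNIV" for f :: "'a + 'a \<Rightarrow> real"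
    by (subst UNIV_Plus_UNIV[symmetric], rule sum.Plus) auto
  show ?thesis
    by (auto simp: vec_eq_iff matrix_vector_mult_def block2_def vec_join_def sum_Plus
        sum_subtractf sum_negf split: sum.splits)
qed

lemma det_eq_0_iff_nontrivial_kernel:
  fixes M :: "real^'n^'n"
  shows "det M = 0 \<longleftrightarrow> (\<exists>v. v \<noteq> 0 \<and> M *v v = 0)"
  using invertible_det_nz[of M] invertible_left_inverse[of M] matrix_left_invertible_ker[of M]
  by auto

lemma block2_kernel_trivial:
  assumes "det (block2 P Q) \<noteq> 0" "P *v x - Q *v y = 0" "Q *v x + P *v y = 0"
  shows "x = 0 \<and> y = 0"
proof -
  have "block2 P Q *v vec_join x y = 0"
    using assms(2,3) by (simp add: block2_mult_vec_join)
  then have "vec_join x y = 0"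
    using assms(1) det_eq_0_iff_nontrivial_kernel by blast
  then show ?thesis
    by simp
qed

lemma det_block2_eq_0_imp_kernel:
  assumes "det (block2 P Q) = 0"
  obtains x y where "x \<noteq> 0" "P *v x - Q *v y = 0" "Q *v x + P *v y = 0"
proof -
  obtain v where "v \<noteq> 0" "block2 P Q *v v = 0"
    using assms det_eq_0_iff_nontrivial_kernel by blast
  moreover obtain x y where "v = vec_join x y"
    by (rule vec_join_cases)
  ultimately have "x \<noteq> 0 \<or> y \<noteq> 0" and kernel: "P *v x - Q *v y = 0" "Q *v x + P *v y = 0"
    by (auto simp: block2_mult_vec_join)
  then consider "x \<noteq> 0" | "x = 0" "y \<noteq> 0"
    by blast
  then show ?thesis
  proof cases
    case 1
    then show ?thesis
      using that kernel by blast
  next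
    case 2
    \<comment> \<open>the kernel is invariant under \<open>(x, y) \<mapsto> (y, -x)\<close>\<close>
    then show ?thesis
      using that[of y 0] kernel by simp
  qed
qed

section \<open>Fourier coefficients of periodic solutions\<close>

lemma Xk_mult: "Xk A B \<tau> T k *v x = A *v x + cos (lam T k * \<tau>) *\<^sub>R (B *v x)"
  by (simp add: Xk_def matrix_vector_mult_add_rdistrib scaleR_matrix_vector_assoc[symmetric])

lemma Yk_mult: "Yk A B \<tau> T k *v x = lam T k *\<^sub>R x + sin (lam T k * \<tau>) *\<^sub>R (B *v x)"
  by (simp add: Yk_def matrix_vector_mult_add_rdistrib scaleR_matrix_vector_assoc[symmetric])

lemma lam_mult_period: "T > 0 \<Longrightarrow> lam T k * T = 2 * real k * pi"
  by (simp add: lam_def)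

lemma periodic_solution_of_block2_kernel:
  fixes A B :: "real^'n^'n"
  assumes "T > 0"
    and kernel: "Xk A B \<tau> T k *v x - Yk A B \<tau> T k *v y = 0"
                "Yk A B \<tau> T k *v x + Xk A B \<tau> T k *v y = 0"
  defines "u \<equiv> \<lambda>t. cos (lam T k * t) *\<^sub>R x + sin (lam T k * t) *\<^sub>R y"
  shows "(u has_vector_derivative (A *v u t + B *v u (t - \<tau>))) (at t)"
    and "u (t + T) = u t"
proof -
  define l where "l = lam T k"
  have "(u has_vector_derivative (- (l * sin (l * t))) *\<^sub>R x + (l * cos (l * t)) *\<^sub>R y) (at t)"
    unfolding u_def l_def[symmetric] by (auto intro!: derivative_eq_intros simp: mult.commute)
  moreover have "A *v u t + B *v u (t - \<tau>) = (- (l * sin (l * t))) *\<^sub>R x + (l * cos (l * t)) *\<^sub>R y"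
  proof -
    define c s where "c = cos (l * \<tau>)" and "s = sin (l * \<tau>)"
    have "A *v x + c *\<^sub>R (B *v x) - s *\<^sub>R (B *v y) = l *\<^sub>R y"
      using kernel(1) by (simp add: Xk_mult Yk_mult l_def c_def s_def algebra_simps)
    moreover have "A *v y + c *\<^sub>R (B *v y) + s *\<^sub>R (B *v x) = - (l *\<^sub>R x)"
      using kernel(2) by (simp add: Xk_mult Yk_mult l_def c_def s_def algebra_simps eq_neg_iff_add_eq_0)
    moreover have "A *v u t + B *v u (t - \<tau>) =
        cos (l * t) *\<^sub>R (A *v x + c *\<^sub>R (B *v x) - s *\<^sub>R (B *v y)) +
        sin (l * t) *\<^sub>R (A *v y + c *\<^sub>R (B *v y) + s *\<^sub>R (B *v x))"
      unfolding u_def l_def[symmetric] c_def s_def right_diff_distrib cos_diff sin_diff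
      by (simp add: matrix_vector_right_distrib matrix_vector_mult_scaleR algebra_simps)
    ultimately show ?thesis
      by (simp add: algebra_simps)
  qed
  ultimately show "(u has_vector_derivative (A *v u t + B *v u (t - \<tau>))) (at t)"
    by simp
  have "l * (t + T) = l * t + 2 * real k * pi"
    using lam_mult_period[OF \<open>T > 0\<close>] by (simp add: l_def distrib_left)
  then show "u (t + T) = u t"
    by (simp add: u_def l_def[symmetric] cos_add sin_add)
qed

lemma integral_by_parts_boundary_cancel:
  fixes u F :: "real \<Rightarrow> 'a::banach"
  assumes "a \<le> b"
    and u: "\<And>t. (u has_vector_derivative F t) (at t)" and F: "continuous_on UNIV F"
    and \<phi>: "\<And>t. (\<phi> has_real_derivative \<phi>' t) (at t)" and \<phi>': "continuous_on UNIV \<phi>'"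
    and boundary: "\<phi> b *\<^sub>R u b = \<phi> a *\<^sub>R u a"
  shows "integral {a..b} (\<lambda>t. \<phi> t *\<^sub>R F t) = - integral {a..b} (\<lambda>t. \<phi>' t *\<^sub>R u t)"
proof -
  have u_cont: "continuous_on UNIV u"
    using u by (meson continuous_at_imp_continuous_on has_vector_derivative_continuous)
  have \<phi>_cont: "continuous_on UNIV \<phi>"
    using \<phi> by (meson continuous_at_imp_continuous_on DERIV_isCont)
  have "((\<lambda>t. \<phi> t *\<^sub>R F t + \<phi>' t *\<^sub>R u t) has_integral \<phi> b *\<^sub>R u b - \<phi> a *\<^sub>R u a) {a..b}"
    using \<open>a \<le> b\<close>
    by (intro fundamental_theorem_of_calculus has_vector_derivative_scaleR
        has_field_derivative_at_within[OF \<phi>] has_vector_derivative_at_within[OF u])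
  then have "integral {a..b} (\<lambda>t. \<phi> t *\<^sub>R F t + \<phi>' t *\<^sub>R u t) = 0"
    using boundary by (simp add: integral_unique)
  moreover have "integral {a..b} (\<lambda>t. \<phi> t *\<^sub>R F t + \<phi>' t *\<^sub>R u t) =
      integral {a..b} (\<lambda>t. \<phi> t *\<^sub>R F t) + integral {a..b} (\<lambda>t. \<phi>' t *\<^sub>R u t)"
    by (intro Henstock_Kurzweil_Integration.integral_add integrable_continuous_UNIV
        continuous_intros \<phi>_cont \<phi>' u_cont F)
  ultimately show ?thesis
    by (simp add: eq_neg_iff_add_eq_0)
qed

lemma integral_delay_periodic:
  fixes u :: "real \<Rightarrow> 'a::euclidean_space" and \<phi> :: "real \<Rightarrow> real"
  assumes "T > 0" and u: "continuous_on UNIV u" and u_periodic: "\<And>t. u (t + T) = u t"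
    and \<phi>: "continuous_on UNIV \<phi>" and \<phi>_periodic: "\<And>t. \<phi> (t + T) = \<phi> t"
  shows "integral {0..T} (\<lambda>t. \<phi> t *\<^sub>R u (t - \<tau>)) = integral {0..T} (\<lambda>t. \<phi> (t + \<tau>) *\<^sub>R u t)"
proof -
  have "\<phi> (t + T + \<tau>) = \<phi> (t + \<tau>)" for t
    using \<phi>_periodic[of "t + \<tau>"] by (simp add: add_ac)
  then have "integral {0..T} (\<lambda>t. \<phi> ((t + - \<tau>) + \<tau>) *\<^sub>R u (t + - \<tau>)) =
      integral {0..T} (\<lambda>t. \<phi> (t + \<tau>) *\<^sub>R u t)"
    using u_periodic
    by (intro integral_periodic_shift[OF _ _ \<open>T > 0\<close>] continuous_intros u
        continuous_on_compose2[OF \<phi>]) auto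
  then show ?thesis
    by simp
qed

lemma integral_delayed_cos_sin:
  fixes u :: "real \<Rightarrow> 'a::euclidean_space" and k :: nat
  assumes "T > 0" and u: "continuous_on UNIV u" and periodic: "\<And>t. u (t + T) = u t"
  defines "C \<equiv> integral {0..T} (\<lambda>t. cos (lam T k * t) *\<^sub>R u t)"
    and "S \<equiv> integral {0..T} (\<lambda>t. sin (lam T k * t) *\<^sub>R u t)"
  shows "integral {0..T} (\<lambda>t. cos (lam T k * t) *\<^sub>R u (t - \<tau>)) =
           cos (lam T k * \<tau>) *\<^sub>R C - sin (lam T k * \<tau>) *\<^sub>R S"
    and "integral {0..T} (\<lambda>t. sin (lam T k * t) *\<^sub>R u (t - \<tau>)) =
           cos (lam T k * \<tau>) *\<^sub>R S + sin (lam T k * \<tau>) *\<^sub>R C"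
proof -
  define l where "l = lam T k"
  have "l * (t + T) = l * t + 2 * real k * pi" for t
    using lam_mult_period[OF \<open>T > 0\<close>] by (simp add: l_def distrib_left)
  then have cos_periodic: "cos (l * (t + T)) = cos (l * t)"
    and sin_periodic: "sin (l * (t + T)) = sin (l * t)" for t
    by (simp_all add: cos_add sin_add)
  have integrable: "(\<lambda>t. \<phi> (l * t) *\<^sub>R u t) integrable_on {0..T}"
    if "continuous_on UNIV \<phi>" for \<phi> :: "real \<Rightarrow> real"
    by (intro integrable_continuous_UNIV continuous_intros u continuous_on_compose2[OF that]) auto
  have "integral {0..T} (\<lambda>t. cos (l * t) *\<^sub>R u (t - \<tau>)) =
      integral {0..T} (\<lambda>t. cos (l * (t + \<tau>)) *\<^sub>R u t)"
    by (rule integral_delay_periodic[where \<phi> = "\<lambda>t. cos (l * t)", OF \<open>T > 0\<close> u periodic _ cos_periodic])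
       (intro continuous_intros)
  also have "\<dots> =
      integral {0..T} (\<lambda>t. cos (l * \<tau>) *\<^sub>R (cos (l * t) *\<^sub>R u t) - sin (l * \<tau>) *\<^sub>R (sin (l * t) *\<^sub>R u t))"
    by (rule integral_cong) (simp add: cos_add distrib_left algebra_simps)
  also have "\<dots> = cos (l * \<tau>) *\<^sub>R C - sin (l * \<tau>) *\<^sub>R S"
    unfolding C_def S_def l_def[symmetric]
    by (subst integral_diff) (auto intro!: integrable_cmul integrable continuous_intros
        simp del: scaleR_scaleR)
  finally show "integral {0..T} (\<lambda>t. cos (lam T k * t) *\<^sub>R u (t - \<tau>)) =
      cos (lam T k * \<tau>) *\<^sub>R C - sin (lam T k * \<tau>) *\<^sub>R S"
    by (simp add: l_def)
  have "integral {0..T} (\<lambda>t. sin (l * t) *\<^sub>R u (t - \<tau>)) =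
      integral {0..T} (\<lambda>t. sin (l * (t + \<tau>)) *\<^sub>R u t)"
    by (rule integral_delay_periodic[where \<phi> = "\<lambda>t. sin (l * t)", OF \<open>T > 0\<close> u periodic _ sin_periodic])
       (intro continuous_intros)
  also have "\<dots> =
      integral {0..T} (\<lambda>t. cos (l * \<tau>) *\<^sub>R (sin (l * t) *\<^sub>R u t) + sin (l * \<tau>) *\<^sub>R (cos (l * t) *\<^sub>R u t))"
    by (rule integral_cong) (simp add: sin_add distrib_left algebra_simps)
  also have "\<dots> = cos (l * \<tau>) *\<^sub>R S + sin (l * \<tau>) *\<^sub>R C"
    unfolding C_def S_def l_def[symmetric]
    by (subst Henstock_Kurzweil_Integration.integral_add)
       (auto intro!: integrable_cmul integrable continuous_intros simp del: scaleR_scaleR)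
  finally show "integral {0..T} (\<lambda>t. sin (lam T k * t) *\<^sub>R u (t - \<tau>)) =
      cos (lam T k * \<tau>) *\<^sub>R S + sin (lam T k * \<tau>) *\<^sub>R C"
    by (simp add: l_def)
qed

lemma integral_cos_sin_derivative:
  fixes u F :: "real \<Rightarrow> 'a::banach"
  assumes "T > 0" and u: "\<And>t. (u has_vector_derivative F t) (at t)" and F: "continuous_on UNIV F"
    and periodic: "\<And>t. u (t + T) = u t"
  shows "integral {0..T} (\<lambda>t. cos (lam T k * t) *\<^sub>R F t) =
           lam T k *\<^sub>R integral {0..T} (\<lambda>t. sin (lam T k * t) *\<^sub>R u t)"
    and "integral {0..T} (\<lambda>t. sin (lam T k * t) *\<^sub>R F t) =
           - (lam T k *\<^sub>R integral {0..T} (\<lambda>t. cos (lam T k * t) *\<^sub>R u t))"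
proof -
  define l where "l = lam T k"
  have uT: "u T = u 0"
    using periodic[of 0] by simp
  have lT: "l * T = 2 * real k * pi"
    unfolding l_def by (rule lam_mult_period) fact
  have "integral {0..T} (\<lambda>t. cos (l * t) *\<^sub>R F t) = - integral {0..T} (\<lambda>t. (- (l * sin (l * t))) *\<^sub>R u t)"
    using \<open>T > 0\<close> uT lT
    by (intro integral_by_parts_boundary_cancel u F) (auto intro!: derivative_eq_intros continuous_intros)
  then show "integral {0..T} (\<lambda>t. cos (lam T k * t) *\<^sub>R F t) =
      lam T k *\<^sub>R integral {0..T} (\<lambda>t. sin (lam T k * t) *\<^sub>R u t)"
    by (simp add: l_def scaleR_scaleR[symmetric] del: scaleR_scaleR)
  have "integral {0..T} (\<lambda>t. sin (l * t) *\<^sub>R F t) = - integral {0..T} (\<lambda>t. (l * cos (l * t)) *\<^sub>R u t)"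
    using \<open>T > 0\<close> uT lT
    by (intro integral_by_parts_boundary_cancel u F) (auto intro!: derivative_eq_intros continuous_intros)
  then show "integral {0..T} (\<lambda>t. sin (lam T k * t) *\<^sub>R F t) =
      - (lam T k *\<^sub>R integral {0..T} (\<lambda>t. cos (lam T k * t) *\<^sub>R u t))"
    by (simp add: l_def scaleR_scaleR[symmetric] del: scaleR_scaleR)
qed

lemma integral_matrix_vector_mult:
  fixes M :: "real^'n^'m"
  shows "f integrable_on S \<Longrightarrow> integral S (\<lambda>x. M *v f x) = M *v integral S f"
  using integral_linear[OF _ matrix_vector_mul_bounded_linear] by (simp add: o_def)

lemma fourier_coefficients_in_block2_kernel:
  fixes A B :: "real^'n^'n" and u :: "real \<Rightarrow> real^'n" and k :: nat
  assumes "T > 0"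
    and solution: "\<And>t. (u has_vector_derivative (A *v u t + B *v u (t - \<tau>))) (at t)"
    and periodic: "\<And>t. u (t + T) = u t"
  defines "C \<equiv> integral {0..T} (\<lambda>t. cos (lam T k * t) *\<^sub>R u t)"
    and "S \<equiv> integral {0..T} (\<lambda>t. sin (lam T k * t) *\<^sub>R u t)"
  shows "Xk A B \<tau> T k *v C - Yk A B \<tau> T k *v S = 0"
    and "Yk A B \<tau> T k *v C + Xk A B \<tau> T k *v S = 0"
proof -
  define F where "F t = A *v u t + B *v u (t - \<tau>)" for t
  have u: "continuous_on UNIV u"
    using solution by (meson continuous_at_imp_continuous_on has_vector_derivative_continuous)
  then have u_delayed: "continuous_on UNIV (\<lambda>t. u (t - \<tau>))"
    by (rule continuous_on_compose2) (auto intro: continuous_intros)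
  have F: "continuous_on UNIV F"
    unfolding F_def using u u_delayed
    by (intro continuous_intros continuous_on_compose2[OF matrix_vector_mult_linear_continuous_on]) auto
  have F_integral: "integral {0..T} (\<lambda>t. \<phi> t *\<^sub>R F t) =
      A *v integral {0..T} (\<lambda>t. \<phi> t *\<^sub>R u t) + B *v integral {0..T} (\<lambda>t. \<phi> t *\<^sub>R u (t - \<tau>))"
    if \<phi>: "continuous_on UNIV \<phi>" for \<phi>
  proof -
    have "integral {0..T} (\<lambda>t. \<phi> t *\<^sub>R F t) =
        integral {0..T} (\<lambda>t. A *v (\<phi> t *\<^sub>R u t)) + integral {0..T} (\<lambda>t. B *v (\<phi> t *\<^sub>R u (t - \<tau>)))"
      unfolding F_def scaleR_right_distrib matrix_vector_mult_scaleR
      by (intro Henstock_Kurzweil_Integration.integral_add integrable_continuous_UNIV continuous_intros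
          continuous_on_compose2[OF matrix_vector_mult_linear_continuous_on] \<phi> u u_delayed) auto
    also have "\<dots> = A *v integral {0..T} (\<lambda>t. \<phi> t *\<^sub>R u t) + B *v integral {0..T} (\<lambda>t. \<phi> t *\<^sub>R u (t - \<tau>))"
      by (intro arg_cong2[where f = "(+)"] integral_matrix_vector_mult integrable_continuous_UNIV
          continuous_intros \<phi> u u_delayed)
    finally show ?thesis .
  qed
  have "A *v C + B *v (cos (lam T k * \<tau>) *\<^sub>R C - sin (lam T k * \<tau>) *\<^sub>R S) = lam T k *\<^sub>R S"
    using F_integral[of "\<lambda>t. cos (lam T k * t)"]
      integral_cos_sin_derivative(1)[OF \<open>T > 0\<close> solution[folded F_def] F periodic]
      integral_delayed_cos_sin(1)[OF \<open>T > 0\<close> u periodic]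
    by (simp add: C_def S_def continuous_intros)
  moreover have "A *v S + B *v (cos (lam T k * \<tau>) *\<^sub>R S + sin (lam T k * \<tau>) *\<^sub>R C) = - (lam T k *\<^sub>R C)"
    using F_integral[of "\<lambda>t. sin (lam T k * t)"]
      integral_cos_sin_derivative(2)[OF \<open>T > 0\<close> solution[folded F_def] F periodic]
      integral_delayed_cos_sin(2)[OF \<open>T > 0\<close> u periodic]
    by (simp add: C_def S_def continuous_intros)
  ultimately show "Xk A B \<tau> T k *v C - Yk A B \<tau> T k *v S = 0"
    and "Yk A B \<tau> T k *v C + Xk A B \<tau> T k *v S = 0"
    by (simp_all add: Xk_mult Yk_mult matrix_vector_right_distrib matrix_vector_mult_scaleR algebra_simps)
qed

lemma periodic_solution_if_hk_eq_0:
  fixes A B :: "real^'n^'n"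
  assumes "T > 0" and "hk A B \<tau> T k = 0"
  shows "\<exists>u :: real \<Rightarrow> real^'n.
           (\<forall>t. (u has_vector_derivative (A *v u t + B *v u (t - \<tau>))) (at t))
         \<and> (\<forall>t. u (t + T) = u t) \<and> u 0 \<noteq> 0"
proof -
  obtain x y where "x \<noteq> 0" and kernel: "Xk A B \<tau> T k *v x - Yk A B \<tau> T k *v y = 0"
      "Yk A B \<tau> T k *v x + Xk A B \<tau> T k *v y = 0"
    using assms(2) unfolding hk_def by (rule det_block2_eq_0_imp_kernel)
  define u where "u t = cos (lam T k * t) *\<^sub>R x + sin (lam T k * t) *\<^sub>R y" for t
  have "\<forall>t. (u has_vector_derivative (A *v u t + B *v u (t - \<tau>))) (at t)"
    and "\<forall>t. u (t + T) = u t"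
    using periodic_solution_of_block2_kernel[OF \<open>T > 0\<close> kernel, folded u_def] by blast+
  moreover have "u 0 \<noteq> 0"
    using \<open>x \<noteq> 0\<close> by (simp add: u_def)
  ultimately show ?thesis
    by blast
qed

lemma periodic_solution_eq_0_if_hk_neq_0:
  fixes A B :: "real^'n^'n" and u :: "real \<Rightarrow> real^'n"
  assumes "T > 0" and hk: "\<And>k. hk A B \<tau> T k \<noteq> 0"
    and solution: "\<And>t. (u has_vector_derivative (A *v u t + B *v u (t - \<tau>))) (at t)"
    and periodic: "\<And>t. u (t + T) = u t"
  shows "u t = 0"
proof (rule periodic_eq_0_if_fourier_coefficients_eq_0[where u = u, OF \<open>T > 0\<close> _ periodic])
  show "continuous_on UNIV u"
    using solution by (meson continuous_at_imp_continuous_on has_vector_derivative_continuous)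
  have "integral {0..T} (\<lambda>t. cos (lam T k * t) *\<^sub>R u t) = 0 \<and>
        integral {0..T} (\<lambda>t. sin (lam T k * t) *\<^sub>R u t) = 0" for k
    using hk[of k] fourier_coefficients_in_block2_kernel[OF \<open>T > 0\<close> solution periodic, where k = k]
    unfolding hk_def by (rule block2_kernel_trivial)
  then show "integral {0..T} (\<lambda>t. cos (lam T k * t) *\<^sub>R u t) = 0"
    and "integral {0..T} (\<lambda>t. sin (lam T k * t) *\<^sub>R u t) = 0" for k
    by blast+
qed

theorem mainTheorem5:
  fixes A B :: "real^'n^'n" and \<tau> T :: real
  assumes "\<tau> > 0" and "T > 0"
  shows "(\<not> (\<exists>u :: real \<Rightarrow> real^'n.
              (\<forall>t. (u has_vector_derivative (A *v u t + B *v u (t - \<tau>))) (at t))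
            \<and> (\<forall>t. u (t + T) = u t)
            \<and> (\<exists>t. u t \<noteq> 0)))
         \<longleftrightarrow> (\<forall>k::nat. hk A B \<tau> T k \<noteq> 0)"
  using periodic_solution_if_hk_eq_0[OF \<open>T > 0\<close>, of A B \<tau>]
    periodic_solution_eq_0_if_hk_neq_0[OF \<open>T > 0\<close>, of A B \<tau>]
  by blast

end
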